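(* Consider mixture models with $G$ and $G-1$ components for data $Y=(Y_1,\dots,Y_n)$, with marginal likelihoods $Z(G)$ and $Z(G-1)$. Suppose the proportions have a Dirichlet$(e_1,\dots,e_G)$ prior, $e_g>0$ (and Dirichlet$(e_1,\dots,e_{G-1})$ in the $(G-1)$-component model), the component parameters $\xi_1,\dots,\xi_G$ are a priori independent with a prior that does not depend on the total number of components, and the prior of the $G$-component model is invariant under relabelling of components. Let $\theta^{(1)},\dots,\theta^{(T)}$ be posterior draws in the $G$-component model and define $$\hat z^{(t)}_{i,g}=\frac{\tau_g^{(t)}f(Y_i;\xi_g^{(t)})}{\sum_{\tilde g=1}^G\tau^{(t)}_{\tilde g}f(Y_i;\xi^{(t)}_{\tilde g})},\qquad \hat p_0(G)=\frac1G\sum_{g=1}^G\frac1T\sum_{t=1}^T\prod_{i=1}^n\bigl(1-\hat z^{(t)}_{i,g}\bigr).$$ If $\hat Z(G-1)$ is a consistent estimator of $Z(G-1)$ and $\hat p_0(G)$ is a consistent estimator of its posterior mean $p_0(G)=\mathrm E[\frac1G\sum_g\prod_i(1-z_{i,g})\mid Y]$, assumed positive, then $$\hat Z(G)=\frac{\Gamma\bigl(\sum_{g=1}^Ge_g\bigr)\Gamma\bigl(n+\sum_{g=1}^{G-1}e_g\bigr)}{\Gamma\bigl(n+\sum_{g=1}^Ge_g\bigr)\Gamma\bigl(\sum_{g=1}^{G-1}e_g\bigr)}\cdot\hat Z(G-1)\cdot\frac{1}{\hat p_0(G)}$$ is a consistent estimator of $Z(G)$. Moreover $p_0(G)$ equals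 the posterior probability that component $G$ is empty (i.e. that no observation is allocated to it).
   Context: Mixture model: $Y_i$ i.i.d. with density $\sum_{g=1}^G\tau_g f(\cdot;\xi_g)$; equivalently, latent allocations $C_i\mid\tau\sim\mathrm{Multinom}_G(1,\tau)$ i.i.d. and $Y_i\mid\xi,C_{i,g}=1\sim f(\cdot;\xi_g)$. $z_{i,g}$ denotes the quantity $\hat z_{i,g}$ evaluated at a generic parameter $\theta$ (the conditional probability that $C_{i,g}=1$ given $Y,\theta$). Consistency is as the simulation size $T\to\infty$. *)

theory Defs
  imports "HOL-Probability.Probability"
begin

text \<open>Components are indexed 0,...,G-1; the paper's component G is index G-1.
  A parameter is theta = (tau, xi) with tau, xi extensional functions on {..<G}.\<close>

definition tau_of :: "nat \<Rightarrow> (nat \<Rightarrow> real) \<Rightarrow> nat \<Rightarrow> real" where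
  "tau_of G u = (\<lambda>g\<in>{..<G}. if g < G - 1 then u g else 1 - (\<Sum>h<G - 1. u h))"

text \<open>Dirichlet(e_0,...,e_{G-1}) density w.r.t. Lebesgue measure on the first G-1 coordinates.\<close>
definition dirichlet_dens :: "nat \<Rightarrow> (nat \<Rightarrow> real) \<Rightarrow> (nat \<Rightarrow> real) \<Rightarrow> real" where
  "dirichlet_dens G e u =
     (if (\<forall>g<G - 1. 0 \<le> u g) \<and> (\<Sum>g<G - 1. u g) \<le> 1
      then Gamma (\<Sum>g<G. e g) / (\<Prod>g<G. Gamma (e g)) * (\<Prod>g<G. tau_of G u g powr (e g - 1))
      else 0)"

definition dirichlet_measure :: "nat \<Rightarrow> (nat \<Rightarrow> real) \<Rightarrow> (nat \<Rightarrow> real) measure" where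
  "dirichlet_measure G e =
     distr (density (PiM {..<G - 1} (\<lambda>_. lborel)) (\<lambda>u. ennreal (dirichlet_dens G e u)))
           (PiM {..<G} (\<lambda>_. borel)) (tau_of G)"

text \<open>Prior of the G-component model: tau ~ Dirichlet(e_0..e_{G-1}) independent of
  xi_g ~ P g independently; the same P is used for every number of components.\<close>
definition mixture_prior ::
  "nat \<Rightarrow> (nat \<Rightarrow> real) \<Rightarrow> (nat \<Rightarrow> 'x measure) \<Rightarrow> ((nat \<Rightarrow> real) \<times> (nat \<Rightarrow> 'x)) measure" where
  "mixture_prior G e P = dirichlet_measure G e \<Otimes>\<^sub>M PiM {..<G} P"

definition mix_lik ::
  "('y \<Rightarrow> 'x \<Rightarrow> real) \<Rightarrow> (nat \<Rightarrow> 'y) \<Rightarrow> nat \<Rightarrow> nat \<Rightarrow> (nat \<Rightarrow> real) \<times> (nat \<Rightarrow> 'x) \<Rightarrow> real" where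
  "mix_lik f Y n G \<theta> = (\<Prod>i<n. \<Sum>g<G. fst \<theta> g * f (Y i) (snd \<theta> g))"

definition marg_lik ::
  "('y \<Rightarrow> 'x \<Rightarrow> real) \<Rightarrow> (nat \<Rightarrow> 'y) \<Rightarrow> nat \<Rightarrow> (nat \<Rightarrow> real) \<Rightarrow> (nat \<Rightarrow> 'x measure) \<Rightarrow> nat \<Rightarrow> ennreal" where
  "marg_lik f Y n e P G = (\<integral>\<^sup>+ \<theta>. ennreal (mix_lik f Y n G \<theta>) \<partial>mixture_prior G e P)"

definition posterior where
  "posterior f Y n e P G =
     density (mixture_prior G e P) (\<lambda>\<theta>. ennreal (mix_lik f Y n G \<theta>) / marg_lik f Y n e P G)"

text \<open>Joint posterior of (theta, C) where C is the allocation vector c :: {..<n} \<rightarrow> {..<G}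
  (c i = g means C_{i,g} = 1).\<close>
definition joint_posterior where
  "joint_posterior f Y n e P G =
     density (mixture_prior G e P \<Otimes>\<^sub>M count_space ({..<n} \<rightarrow>\<^sub>E {..<G}))
       (\<lambda>(\<theta>, c). ennreal (\<Prod>i<n. fst \<theta> (c i) * f (Y i) (snd \<theta> (c i))) / marg_lik f Y n e P G)"

definition zprob where
  "zprob f Y G \<theta> i g =
     fst \<theta> g * f (Y i) (snd \<theta> g) / (\<Sum>h<G. fst \<theta> h * f (Y i) (snd \<theta> h))"

definition p0 where
  "p0 f Y n e P G =
     (\<integral>\<theta>. (1 / real G) * (\<Sum>g<G. \<Prod>i<n. (1 - zprob f Y G \<theta> i g)) \<partial>posterior f Y n e P G)"

definition p0_hat where
  "p0_hat f Y n G draws T \<omega> =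
     (1 / real G) * (\<Sum>g<G. (1 / real T) * (\<Sum>t=1..T. \<Prod>i<n. (1 - zprob f Y G (draws t \<omega>) i g)))"

definition consistent :: "'w measure \<Rightarrow> (nat \<Rightarrow> 'w \<Rightarrow> real) \<Rightarrow> real \<Rightarrow> bool" where
  "consistent \<Omega> X c \<longleftrightarrow> (\<forall>T. X T \<in> borel_measurable \<Omega>) \<and>
     (\<forall>\<epsilon>>0. (\<lambda>T. measure \<Omega> {\<omega> \<in> space \<Omega>. \<bar>X T \<omega> - c\<bar> > \<epsilon>}) \<longlonglongrightarrow> 0)"

end

theory Submission
  imports Defs
begin

text \<open>Expanding each factor of the mixture likelihood over the allocations c of the observations,
  the prior integral of every complete-data likelihood splits into a Dirichlet moment of the
  allocation counts times an integral over the component parameters. For allocations that leave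
  the last component empty, the parameter integral does not involve that component, and the
  Dirichlet moments of the G- and (G-1)-component models differ by the same Gamma ratio for all
  such c. Hence Z(G) times the posterior probability that the last component is empty equals
  that Gamma ratio times Z(G-1). On the other hand L(\<theta>) times the product of the 1 - z(i,g) over
  the observations is the likelihood with component g deleted, so by invariance under relabelling
  p0(G) equals the same emptiness probability. Consistency of the estimator of Z(G) then follows
  from the continuity of (x, y) \<mapsto> x / y at (Z(G-1), p0(G)), where p0(G) > 0.\<close>

section \<open>Dirichlet integrals\<close>

lemma beta_integrand_scaled:
  fixes a b s t :: real
  assumes s: "s > 0"
  shows "indicator {0..s} (s * t) * (s * t) powr (a - 1) * (s - s * t) powr (b - 1)
    = s powr (a + b - 2) * (indicator {0..1} t * (t powr (a - 1) * (1 - t) powr (b - 1)))"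
proof (cases "t \<in> {0..1}")
  case True
  then have "s * t \<in> {0..s}" using s by auto
  moreover have "s - s * t = s * (1 - t)" by (simp add: algebra_simps)
  then have "(s * t) powr (a - 1) * (s - s * t) powr (b - 1)
      = s powr (a - 1) * s powr (b - 1) * (t powr (a - 1) * (1 - t) powr (b - 1))"
    using True s by (simp add: powr_mult)
  moreover have "s powr (a + b - 2) = s powr (a - 1) * s powr (b - 1)"
    using s by (simp add: powr_add[symmetric])
  ultimately show ?thesis using True by (simp add: mult_ac)
next
  case False
  then have "s * t \<notin> {0..s}" using s by (auto simp: zero_le_mult_iff mult_le_cancel_left1)
  then show ?thesis using False by simp
qed

lemma nn_integral_beta_scaled:
  fixes a b s :: real
  assumes a: "a > 0" and b: "b > 0" and s: "s > 0"
  shows "(\<integral>\<^sup>+ y. ennreal (indicator {0..s} y * y powr (a - 1) * (s - y) powr (b - 1)) \<partial>lborel)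
         = ennreal (s powr (a + b - 1) * Beta a b)"
proof -
  have "(\<integral>\<^sup>+ y. ennreal (indicator {0..s} y * y powr (a - 1) * (s - y) powr (b - 1)) \<partial>lborel)
     = ennreal \<bar>s\<bar> * (\<integral>\<^sup>+ t. ennreal (indicator {0..s} (0 + s * t) * (0 + s * t) powr (a - 1)
          * (s - (0 + s * t)) powr (b - 1)) \<partial>lborel)"
    by (rule nn_integral_real_affine) (use s in auto)
  also have "\<dots> = ennreal s * (\<integral>\<^sup>+ t. ennreal (s powr (a + b - 2))
      * ennreal (indicator {0..1} t * (t powr (a - 1) * (1 - t) powr (b - 1))) \<partial>lborel)"
    using s by (simp add: beta_integrand_scaled[OF s] ennreal_mult[symmetric])
  also have "\<dots> = ennreal s * (ennreal (s powr (a + b - 2)) * ennreal (Beta a b))"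
  proof -
    have "(\<integral>\<^sup>+ t. ennreal (indicator {0..1} t * (t powr (a - 1) * (1 - t) powr (b - 1))) \<partial>lborel)
        = ennreal (Beta a b)"
      by (rule nn_integral_has_integral_lebesgue) (auto intro: has_integral_Beta_real[OF a b])
    then show ?thesis by (subst nn_integral_cmult) auto
  qed
  also have "\<dots> = ennreal (s * s powr (a + b - 2) * Beta a b)"
    using s a b by (simp add: ennreal_mult[symmetric] Beta_def mult_ac)
  also have "s * s powr (a + b - 2) = s powr (a + b - 1)"
    using s by (simp add: powr_add[symmetric] powr_mult_base)
  finally show ?thesis .
qed

text \<open>Unnormalised Dirichlet(a 0, ..., a k) density on the simplex of total mass r, written in the
  free coordinates x 0, ..., x (k - 1); coordinate k is r minus their sum.\<close>
definition simplex_kernel :: "nat \<Rightarrow> real \<Rightarrow> (nat \<Rightarrow> real) \<Rightarrow> (nat \<Rightarrow> real) \<Rightarrow> real" where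
  "simplex_kernel k r a x = (if (\<forall>g<k. 0 \<le> x g) \<and> (\<Sum>g<k. x g) \<le> r
     then (\<Prod>g<k. x g powr (a g - 1)) * (r - (\<Sum>g<k. x g)) powr (a k - 1) else 0)"

lemma simplex_kernel_nonneg: "simplex_kernel k r a x \<ge> 0"
  by (auto simp: simplex_kernel_def intro!: prod_nonneg mult_nonneg_nonneg)

lemma borel_measurable_simplex_kernel[measurable]:
  "(\<lambda>x. simplex_kernel k r a x) \<in> borel_measurable (PiM {..<k} (\<lambda>_. lborel))"
  unfolding simplex_kernel_def by measurable

lemma simplex_kernel_fun_upd:
  "simplex_kernel (Suc k) r a (x(k := y)) =
    (if (\<forall>g<k. 0 \<le> x g) \<and> (\<Sum>g<k. x g) \<le> r then (\<Prod>g<k. x g powr (a g - 1)) else 0) *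
    (indicator {0..r - (\<Sum>g<k. x g)} y * y powr (a k - 1) * ((r - (\<Sum>g<k. x g)) - y) powr (a (Suc k) - 1))"
proof -
  have "(\<Sum>g<Suc k. (x(k := y)) g) = (\<Sum>g<k. x g) + y"
    by simp
  moreover have "(\<Prod>g<Suc k. (x(k := y)) g powr (a g - 1)) = (\<Prod>g<k. x g powr (a g - 1)) * y powr (a k - 1)"
    by simp
  moreover have "(\<forall>g<Suc k. 0 \<le> (x(k := y)) g) = ((\<forall>g<k. 0 \<le> x g) \<and> 0 \<le> y)"
    by (auto simp: less_Suc_eq)
  ultimately show ?thesis
    unfolding simplex_kernel_def by (auto simp: indicator_def algebra_simps)
qed

lemma nn_integral_simplex_kernel_last:
  assumes "a k > 0" "a (Suc k) > 0"
  shows "(\<integral>\<^sup>+ y. ennreal (simplex_kernel (Suc k) r a (x(k := y))) \<partial>lborel)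
    = ennreal (simplex_kernel k r (a(k := a k + a (Suc k))) x * Beta (a k) (a (Suc k)))"
proof -
  define c where "c = (if (\<forall>g<k. 0 \<le> x g) \<and> (\<Sum>g<k. x g) \<le> r then (\<Prod>g<k. x g powr (a g - 1)) else 0)"
  define s where "s = r - (\<Sum>g<k. x g)"
  have c0: "c \<ge> 0" unfolding c_def by (auto intro!: prod_nonneg)
  have B0: "Beta (a k) (a (Suc k)) \<ge> 0"
    unfolding Beta_def using assms by (simp add: less_imp_le)
  have "(\<integral>\<^sup>+ y. ennreal (simplex_kernel (Suc k) r a (x(k := y))) \<partial>lborel)
     = (\<integral>\<^sup>+ y. ennreal c * ennreal (indicator {0..s} y * y powr (a k - 1) * (s - y) powr (a (Suc k) - 1)) \<partial>lborel)"
    unfolding simplex_kernel_fun_upd c_def[symmetric] s_def[symmetric] using c0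
    by (intro nn_integral_cong) (simp add: ennreal_mult)
  also have "\<dots> = ennreal c * (\<integral>\<^sup>+ y. ennreal (indicator {0..s} y * y powr (a k - 1) * (s - y) powr (a (Suc k) - 1)) \<partial>lborel)"
    by (rule nn_integral_cmult) measurable
  also have "\<dots> = ennreal (simplex_kernel k r (a(k := a k + a (Suc k))) x * Beta (a k) (a (Suc k)))"
  proof (cases "s > 0")
    case True
    show ?thesis
      unfolding nn_integral_beta_scaled[OF assms True] using c0 B0 True
      by (auto simp: ennreal_mult[symmetric] simplex_kernel_def c_def s_def mult_ac)
  next
    case False
    have "(\<lambda>y. ennreal (indicator {0..s} y * y powr (a k - 1) * (s - y) powr (a (Suc k) - 1))) = (\<lambda>_. 0)"
      using False by (intro ext) (auto simp: indicator_def)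
    moreover have "simplex_kernel k r (a(k := a k + a (Suc k))) x = 0"
      using False by (auto simp: simplex_kernel_def s_def)
    ultimately show ?thesis by simp
  qed
  finally show ?thesis .
qed

lemma prod_Gamma_merge_Beta:
  fixes a :: "nat \<Rightarrow> real"
  assumes "a k > 0" "a (Suc k) > 0"
  shows "(\<Prod>g\<le>k. Gamma ((a(k := a k + a (Suc k))) g)) * Beta (a k) (a (Suc k)) = (\<Prod>g\<le>Suc k. Gamma (a g))"
proof -
  have "Gamma (a k + a (Suc k)) > 0"
    using assms by simp
  then show ?thesis
    by (simp add: lessThan_Suc_atMost[symmetric] Beta_def)
qed

lemma nn_integral_simplex_kernel:
  assumes "\<forall>g\<le>k. a g > 0" "r > 0"
  shows "(\<integral>\<^sup>+ x. ennreal (simplex_kernel k r a x) \<partial>PiM {..<k} (\<lambda>_. lborel))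
     = ennreal (r powr ((\<Sum>g\<le>k. a g) - 1) * (\<Prod>g\<le>k. Gamma (a g)) / Gamma (\<Sum>g\<le>k. a g))"
  using assms
proof (induction k arbitrary: a)
  case 0
  have "Gamma (a 0) \<noteq> 0" using 0 by (simp add: less_imp_neq[symmetric])
  then show ?case
    using 0 by (simp add: PiM_empty nn_integral_count_space_finite simplex_kernel_def less_imp_le)
next
  case (Suc k)
  interpret product_sigma_finite "\<lambda>_::nat. lborel :: real measure" by standard
  define a' where "a' = a(k := a k + a (Suc k))"
  define B where "B = Beta (a k) (a (Suc k))"
  define I where "I = r powr ((\<Sum>g\<le>k. a' g) - 1) * (\<Prod>g\<le>k. Gamma (a' g)) / Gamma (\<Sum>g\<le>k. a' g)"
  have ak: "a k > 0" "a (Suc k) > 0" using Suc.prems by auto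
  have B0: "B \<ge> 0" unfolding B_def Beta_def using ak by (simp add: less_imp_le)
  have a'_pos: "\<forall>g\<le>k. a' g > 0" using Suc.prems ak by (auto simp: a'_def add_pos_pos)
  have I0: "I \<ge> 0"
    unfolding I_def using a'_pos
    by (intro divide_nonneg_nonneg mult_nonneg_nonneg prod_nonneg less_imp_le[OF Gamma_real_pos]
        sum_pos) auto
  have sum_a': "(\<Sum>g\<le>k. a' g) = (\<Sum>g\<le>Suc k. a g)"
    by (simp add: a'_def atMost_Suc lessThan_Suc_atMost[symmetric])
  have "(\<integral>\<^sup>+ x. ennreal (simplex_kernel (Suc k) r a x) \<partial>PiM {..<Suc k} (\<lambda>_. lborel))
     = (\<integral>\<^sup>+ x. (\<integral>\<^sup>+ y. ennreal (simplex_kernel (Suc k) r a (x(k := y))) \<partial>lborel) \<partial>PiM {..<k} (\<lambda>_. lborel))"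
    unfolding lessThan_Suc by (rule product_nn_integral_insert) (auto simp flip: lessThan_Suc)
  also have "\<dots> = (\<integral>\<^sup>+ x. ennreal (simplex_kernel k r a' x) * ennreal B \<partial>PiM {..<k} (\<lambda>_. lborel))"
    using B0 by (simp add: nn_integral_simplex_kernel_last[OF ak] a'_def B_def ennreal_mult simplex_kernel_nonneg)
  also have "\<dots> = ennreal I * ennreal B"
    by (subst nn_integral_multc) (auto simp: Suc.IH[OF a'_pos Suc.prems(2)] I_def)
  also have "\<dots> = ennreal (I * B)"
    using I0 B0 by (rule ennreal_mult[symmetric])
  also have "I * B = r powr ((\<Sum>g\<le>Suc k. a g) - 1) * (\<Prod>g\<le>Suc k. Gamma (a g)) / Gamma (\<Sum>g\<le>Suc k. a g)"
  proof -
    have "(\<Prod>g\<le>k. Gamma (a' g)) * B = (\<Prod>g\<le>Suc k. Gamma (a g))"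
      unfolding a'_def B_def by (rule prod_Gamma_merge_Beta[OF ak])
    moreover have "I * B = r powr ((\<Sum>g\<le>k. a' g) - 1) * ((\<Prod>g\<le>k. Gamma (a' g)) * B) / Gamma (\<Sum>g\<le>k. a' g)"
      unfolding I_def by (simp add: mult.assoc)
    ultimately show ?thesis
      unfolding sum_a' by simp
  qed
  finally show ?case .
qed

lemma measurable_tau_of[measurable]:
  "tau_of G \<in> measurable (PiM {..<G - 1} (\<lambda>_. lborel)) (PiM {..<G} (\<lambda>_. borel))"
  unfolding tau_of_def
proof (rule measurable_restrict)
  fix i
  show "(\<lambda>u. if i < G - 1 then u i else 1 - (\<Sum>h<G - 1. u h)) \<in> borel_measurable (PiM {..<G - 1} (\<lambda>_. lborel))"
    by (cases "i < G - 1") simp_all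
qed

text \<open>The simplifier rewrites G - 1 to G - Suc 0, so the measurability prover needs both forms.\<close>

lemmas measurable_tau_of'[measurable] = measurable_tau_of[simplified]

lemma borel_measurable_dirichlet_dens[measurable]:
  "(\<lambda>u. dirichlet_dens G e u) \<in> borel_measurable (PiM {..<G - 1} (\<lambda>_. lborel))"
proof -
  have "(\<lambda>u. tau_of G u g) \<in> borel_measurable (PiM {..<G - 1} (\<lambda>_. lborel))" if "g < G" for g
    using measurable_comp[OF measurable_tau_of measurable_component_singleton[of g "{..<G}" "\<lambda>_. borel"]] that
    by (simp add: comp_def)
  then have "(\<lambda>u. \<Prod>g<G. tau_of G u g powr (e g - 1)) \<in> borel_measurable (PiM {..<G - 1} (\<lambda>_. lborel))"
    by (intro borel_measurable_prod) measurable
  then show ?thesis unfolding dirichlet_dens_def by measurable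
qed

lemmas borel_measurable_dirichlet_dens'[measurable] = borel_measurable_dirichlet_dens[simplified]

lemma sets_dirichlet_measure: "sets (dirichlet_measure K e) = sets (PiM {..<K} (\<lambda>_. borel))"
  by (simp add: dirichlet_measure_def)

lemma power_mult_powr: "(x::real) \<ge> 0 \<Longrightarrow> x ^ m * x powr (e - 1) = x powr (e + real m - 1)"
  by (cases "x = 0") (simp_all add: powr_realpow[symmetric] powr_add[symmetric] algebra_simps)

lemma sum_lessThan_pos:
  fixes e :: "nat \<Rightarrow> real"
  assumes "K \<ge> 1" "\<forall>g<K. e g > 0"
  shows "(\<Sum>g<K. e g) > 0"
proof -
  have "0 \<in> {..<K}" using assms(1) by simp
  then show ?thesis using assms(2) by (intro sum_pos) auto
qed

definition dirichlet_moment :: "nat \<Rightarrow> (nat \<Rightarrow> real) \<Rightarrow> (nat \<Rightarrow> nat) \<Rightarrow> real" where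
  "dirichlet_moment K e m = Gamma (\<Sum>g<K. e g) / (\<Prod>g<K. Gamma (e g)) * (\<Prod>g<K. Gamma (e g + real (m g)))
     / Gamma ((\<Sum>g<K. e g) + real (\<Sum>g<K. m g))"

lemma dirichlet_moment_nonneg:
  assumes "K \<ge> 1" "\<forall>g<K. e g > 0"
  shows "dirichlet_moment K e m \<ge> 0"
proof -
  have "(\<Sum>g<K. e g) > 0" by (rule sum_lessThan_pos[OF assms])
  then show ?thesis
    unfolding dirichlet_moment_def using assms(2)
    by (intro divide_nonneg_nonneg mult_nonneg_nonneg prod_nonneg less_imp_le[OF Gamma_real_pos])
       (auto intro!: add_pos_nonneg sum_nonneg)
qed

lemma dirichlet_dens_times_monomial:
  assumes G: "G = Suc k" and e: "\<forall>g<G. e g > 0"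
  defines "K \<equiv> Gamma (\<Sum>g<G. e g) / (\<Prod>g<G. Gamma (e g))"
  shows "ennreal (dirichlet_dens G e u) * ennreal (\<Prod>g<G. tau_of G u g ^ m g)
    = ennreal K * ennreal (simplex_kernel k 1 (\<lambda>g. e g + real (m g)) u)"
proof (cases "(\<forall>g<k. 0 \<le> u g) \<and> (\<Sum>g<k. u g) \<le> 1")
  case True
  have K0: "K \<ge> 0"
    unfolding K_def using e sum_lessThan_pos[of G e] G
    by (intro divide_nonneg_nonneg prod_nonneg) (auto intro!: less_imp_le)
  have t0: "tau_of G u g \<ge> 0" if "g < G" for g
    using True that by (auto simp: tau_of_def G)
  have dens: "dirichlet_dens G e u = K * (\<Prod>g<G. tau_of G u g powr (e g - 1))"
    using True by (simp add: dirichlet_dens_def K_def G)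
  have "(\<Prod>g<G. tau_of G u g powr (e g - 1)) * (\<Prod>g<G. tau_of G u g ^ m g)
      = (\<Prod>g<G. tau_of G u g powr (e g + real (m g) - 1))"
    by (auto simp: prod.distrib[symmetric] t0 mult.commute[of "_ powr _"] power_mult_powr intro!: prod.cong)
  also have "\<dots> = simplex_kernel k 1 (\<lambda>g. e g + real (m g)) u"
    using True by (simp add: G tau_of_def simplex_kernel_def)
  finally have "dirichlet_dens G e u * (\<Prod>g<G. tau_of G u g ^ m g) = K * simplex_kernel k 1 (\<lambda>g. e g + real (m g)) u"
    by (simp add: dens mult.assoc)
  moreover have "dirichlet_dens G e u \<ge> 0" "(\<Prod>g<G. tau_of G u g ^ m g) \<ge> 0"
    unfolding dens using K0 t0 by (auto intro!: mult_nonneg_nonneg prod_nonneg)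
  ultimately show ?thesis
    using K0 simplex_kernel_nonneg by (simp add: ennreal_mult[symmetric])
next
  case False
  then have "dirichlet_dens G e u = 0" "simplex_kernel k 1 (\<lambda>g. e g + real (m g)) u = 0"
    by (auto simp: dirichlet_dens_def simplex_kernel_def G)
  then show ?thesis by simp
qed

lemma nn_integral_dirichlet_monomial:
  fixes m :: "nat \<Rightarrow> nat"
  assumes G: "G \<ge> 1" and e: "\<forall>g<G. e g > 0"
  shows "(\<integral>\<^sup>+ \<tau>. ennreal (\<Prod>g<G. \<tau> g ^ m g) \<partial>dirichlet_measure G e) = ennreal (dirichlet_moment G e m)"
proof -
  obtain k where k: "G = Suc k" using G by (cases G) auto
  define K where "K = Gamma (\<Sum>g<G. e g) / (\<Prod>g<G. Gamma (e g))"
  define a where "a = (\<lambda>g. e g + real (m g))"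
  have K0: "K \<ge> 0"
    unfolding K_def using e sum_lessThan_pos[OF G e]
    by (intro divide_nonneg_nonneg prod_nonneg) (auto intro!: less_imp_le)
  have a_pos: "\<forall>g\<le>k. a g > 0" using e k by (auto simp: a_def add_pos_nonneg)
  have sum_a: "(\<Sum>g\<le>k. a g) = (\<Sum>g<G. e g) + real (\<Sum>g<G. m g)"
    by (simp add: a_def k lessThan_Suc_atMost sum.distrib)
  have "(\<integral>\<^sup>+ \<tau>. ennreal (\<Prod>g<G. \<tau> g ^ m g) \<partial>dirichlet_measure G e)
      = (\<integral>\<^sup>+ u. ennreal (dirichlet_dens G e u) * ennreal (\<Prod>g<G. tau_of G u g ^ m g) \<partial>PiM {..<G - 1} (\<lambda>_. lborel))"
    unfolding dirichlet_measure_def by (subst nn_integral_distr, simp_all, subst nn_integral_density) auto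
  also have "\<dots> = (\<integral>\<^sup>+ u. ennreal K * ennreal (simplex_kernel k 1 a u) \<partial>PiM {..<k} (\<lambda>_. lborel))"
    unfolding dirichlet_dens_times_monomial[OF k e] K_def a_def using k by simp
  also have "\<dots> = ennreal K * ennreal ((\<Prod>g\<le>k. Gamma (a g)) / Gamma (\<Sum>g\<le>k. a g))"
    by (subst nn_integral_cmult) (auto simp: nn_integral_simplex_kernel[OF a_pos])
  also have "\<dots> = ennreal (K * ((\<Prod>g\<le>k. Gamma (a g)) / Gamma (\<Sum>g\<le>k. a g)))"
    using K0 a_pos
    by (intro ennreal_mult[symmetric] divide_nonneg_nonneg prod_nonneg less_imp_le[OF Gamma_real_pos] sum_pos)
      auto
  also have "K * ((\<Prod>g\<le>k. Gamma (a g)) / Gamma (\<Sum>g\<le>k. a g)) = dirichlet_moment G e m"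
  proof -
    have "(\<Prod>g\<le>k. Gamma (a g)) = (\<Prod>g<G. Gamma (e g + real (m g)))"
      by (simp add: a_def k lessThan_Suc_atMost)
    then show ?thesis by (simp add: sum_a dirichlet_moment_def K_def)
  qed
  finally show ?thesis .
qed

lemma prob_space_dirichlet_measure:
  assumes "G \<ge> 1" "\<forall>g<G. e g > 0"
  shows "prob_space (dirichlet_measure G e)"
proof
  have "emeasure (dirichlet_measure G e) (space (dirichlet_measure G e))
     = (\<integral>\<^sup>+ \<tau>. ennreal (\<Prod>g<G. \<tau> g ^ 0) \<partial>dirichlet_measure G e)"
    by simp
  also have "\<dots> = 1"
    using nn_integral_dirichlet_monomial[OF assms, of "\<lambda>_. 0"] assms sum_lessThan_pos[OF assms]
    by (auto simp: dirichlet_moment_def less_imp_neq[symmetric] prod_pos)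
  finally show "emeasure (dirichlet_measure G e) (space (dirichlet_measure G e)) = 1" .
qed

lemma AE_dirichlet_measure_nonneg: "AE \<tau> in dirichlet_measure G e. \<forall>g<G. \<tau> g \<ge> 0"
  unfolding dirichlet_measure_def
proof (subst AE_distr_iff)
  show "AE u in density (PiM {..<G - 1} (\<lambda>_. lborel)) (\<lambda>u. ennreal (dirichlet_dens G e u)).
      \<forall>g<G. 0 \<le> tau_of G u g"
    by (subst AE_density) (measurable, auto simp: dirichlet_dens_def tau_of_def)
qed auto

section \<open>Expansion over allocations\<close>

lemma sets_mixture_prior:
  "sets (mixture_prior K e P) = sets (PiM {..<K} (\<lambda>_. borel) \<Otimes>\<^sub>M PiM {..<K} P)"
  unfolding mixture_prior_def by (intro sets_pair_measure_cong sets_dirichlet_measure refl)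

lemma borel_measurable_dirichlet_component[measurable]:
  "h < K \<Longrightarrow> (\<lambda>\<tau>. \<tau> h) \<in> borel_measurable (dirichlet_measure K e)"
  by (subst measurable_cong_sets[OF sets_dirichlet_measure refl]) simp

lemma borel_measurable_PiM_component_f:
  assumes "\<forall>g<K. sets (P g) = sets X" "\<forall>y. f y \<in> borel_measurable X" "h < K"
  shows "(\<lambda>\<xi>. f y (\<xi> h)) \<in> borel_measurable (PiM {..<K} P)"
proof -
  have "f y \<in> borel_measurable (P h)"
    using assms by (subst measurable_cong_sets[of _ X]) auto
  then show ?thesis
    using measurable_compose[OF measurable_component_singleton[of h "{..<K}" P]] assms(3) by auto
qed

lemma borel_measurable_mixture_prior_weight[measurable]:
  "h < K \<Longrightarrow> (\<lambda>\<theta>. fst \<theta> h) \<in> borel_measurable (mixture_prior K e P)"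
  unfolding mixture_prior_def by measurable

lemma borel_measurable_mixture_prior_f:
  assumes "\<forall>g<K. sets (P g) = sets X" "\<forall>y. f y \<in> borel_measurable X" "h < K"
  shows "(\<lambda>\<theta>. f y (snd \<theta> h)) \<in> borel_measurable (mixture_prior K e P)"
  using measurable_compose[OF measurable_snd borel_measurable_PiM_component_f[OF assms]]
  unfolding mixture_prior_def .

lemma AE_mixture_prior_nonneg:
  assumes "K \<ge> 1" "\<forall>g<K. e g > 0" "\<forall>g<K. prob_space (P g)"
  shows "AE \<theta> in mixture_prior K e P. \<forall>g<K. fst \<theta> g \<ge> 0"
proof -
  let ?D = "dirichlet_measure K e" and ?Q = "PiM {..<K} P"
  interpret D: prob_space ?D using prob_space_dirichlet_measure[OF assms(1,2)] .
  interpret Q: prob_space ?Q using assms(3) by (intro prob_space_PiM) auto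
  interpret DQ: pair_sigma_finite ?D ?Q by standard
  show ?thesis unfolding mixture_prior_def
  proof (rule DQ.AE_pair_measure)
    show "{x \<in> space (?D \<Otimes>\<^sub>M ?Q). \<forall>g<K. 0 \<le> fst x g} \<in> sets (?D \<Otimes>\<^sub>M ?Q)"
      by measurable
    show "AE x in ?D. AE y in ?Q. \<forall>g<K. 0 \<le> fst (x, y) g"
      using AE_dirichlet_measure_nonneg[of K e] by eventually_elim auto
  qed
qed

definition complete_lik ::
  "('y \<Rightarrow> 'x \<Rightarrow> real) \<Rightarrow> (nat \<Rightarrow> 'y) \<Rightarrow> nat \<Rightarrow> (nat \<Rightarrow> nat) \<Rightarrow> (nat \<Rightarrow> real) \<times> (nat \<Rightarrow> 'x) \<Rightarrow> real" where
  "complete_lik f Y n c \<theta> = (\<Prod>i<n. fst \<theta> (c i) * f (Y i) (snd \<theta> (c i)))"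

definition alloc_count :: "nat \<Rightarrow> (nat \<Rightarrow> nat) \<Rightarrow> nat \<Rightarrow> nat" where
  "alloc_count n c g = card {i. i < n \<and> c i = g}"

definition param_integral ::
  "nat \<Rightarrow> (nat \<Rightarrow> 'x measure) \<Rightarrow> ('y \<Rightarrow> 'x \<Rightarrow> real) \<Rightarrow> (nat \<Rightarrow> 'y) \<Rightarrow> nat \<Rightarrow> (nat \<Rightarrow> nat) \<Rightarrow> ennreal" where
  "param_integral K P f Y n c = (\<integral>\<^sup>+\<xi>. ennreal (\<Prod>i<n. f (Y i) (\<xi> (c i))) \<partial>PiM {..<K} P)"

lemma PiE_lessThan_less: "c \<in> {..<n} \<rightarrow>\<^sub>E {..<k} \<Longrightarrow> i < n \<Longrightarrow> c i < (k::nat)"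
  using PiE_mem[of c "{..<n}" "\<lambda>_. {..<k}" i] by fastforce

lemma PiE_lessThan_mono: "c \<in> {..<n} \<rightarrow>\<^sub>E {..<k} \<Longrightarrow> k \<le> K \<Longrightarrow> c \<in> {..<n} \<rightarrow>\<^sub>E {..<(K::nat)}"
  using PiE_mono[of "{..<n}" "\<lambda>_. {..<k}" "\<lambda>_. {..<K}"] by auto

lemma prod_alloc_eq_prod_power:
  assumes "c \<in> {..<n} \<rightarrow>\<^sub>E {..<K}"
  shows "(\<Prod>i<n. (\<tau>::nat \<Rightarrow> real) (c i)) = (\<Prod>g<K. \<tau> g ^ alloc_count n c g)"
proof -
  have "(\<Prod>g<K. \<tau> g ^ alloc_count n c g) = (\<Prod>g<K. \<Prod>i\<in>{x. x \<in> {..<n} \<and> c x = g}. \<tau> (c i))"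
    by (intro prod.cong refl) (simp add: alloc_count_def)
  also have "\<dots> = (\<Prod>i<n. \<tau> (c i))"
    by (rule prod.group) (use assms in auto)
  finally show ?thesis by simp
qed

lemma sum_alloc_count:
  assumes "c \<in> {..<n} \<rightarrow>\<^sub>E {..<K}"
  shows "(\<Sum>g<K. alloc_count n c g) = n"
proof -
  have "(\<Sum>g<K. alloc_count n c g) = (\<Sum>g<K. \<Sum>i\<in>{x. x \<in> {..<n} \<and> c x = g}. (1::nat))"
    by (intro sum.cong refl) (simp add: alloc_count_def)
  also have "\<dots> = (\<Sum>i<n. 1)"
    by (rule sum.group) (use assms in auto)
  finally show ?thesis by simp
qed

lemma borel_measurable_complete_lik:
  assumes "\<forall>g<K. sets (P g) = sets X" "\<forall>y. f y \<in> borel_measurable X" "c \<in> {..<n} \<rightarrow>\<^sub>E {..<K}"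
  shows "complete_lik f Y n c \<in> borel_measurable (mixture_prior K e P)"
  unfolding complete_lik_def[abs_def] using assms PiE_lessThan_less[OF assms(3)]
  by (intro borel_measurable_prod borel_measurable_times borel_measurable_mixture_prior_weight
      borel_measurable_mixture_prior_f) auto

lemma nn_integral_complete_lik:
  assumes K: "K \<ge> 1" and e: "\<forall>g<K. e g > 0"
    and P: "\<forall>g<K. prob_space (P g) \<and> sets (P g) = sets X"
    and fm: "\<forall>y. f y \<in> borel_measurable X" and fn: "\<forall>y x. f y x \<ge> 0"
    and c: "c \<in> {..<n} \<rightarrow>\<^sub>E {..<K}"
  shows "(\<integral>\<^sup>+\<theta>. ennreal (complete_lik f Y n c \<theta>) \<partial>mixture_prior K e P)
      = ennreal (dirichlet_moment K e (alloc_count n c)) * param_integral K P f Y n c"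
proof -
  let ?D = "dirichlet_measure K e" and ?Q = "PiM {..<K} P"
  interpret D: prob_space ?D using prob_space_dirichlet_measure[OF K e] .
  interpret Q: prob_space ?Q using P by (intro prob_space_PiM) auto
  interpret DQ: pair_sigma_finite ?D ?Q by standard
  have ci: "c i < K" if "i < n" for i using PiE_lessThan_less[OF c that] .
  have mA: "(\<lambda>\<tau>. ennreal (\<Prod>i<n. \<tau> (c i))) \<in> borel_measurable ?D"
    using ci by (intro measurable_compose[OF _ measurable_ennreal] borel_measurable_prod) auto
  have mB: "(\<lambda>\<xi>. ennreal (\<Prod>i<n. f (Y i) (\<xi> (c i)))) \<in> borel_measurable ?Q"
    using ci P fm
    by (intro measurable_compose[OF _ measurable_ennreal] borel_measurable_prod borel_measurable_PiM_component_f) auto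
  have "(\<integral>\<^sup>+\<theta>. ennreal (complete_lik f Y n c \<theta>) \<partial>mixture_prior K e P)
      = (\<integral>\<^sup>+\<theta>. ennreal (\<Prod>i<n. fst \<theta> (c i)) * ennreal (\<Prod>i<n. f (Y i) (snd \<theta> (c i))) \<partial>(?D \<Otimes>\<^sub>M ?Q))"
    unfolding mixture_prior_def complete_lik_def using fn
    by (intro nn_integral_cong) (simp add: prod.distrib ennreal_mult'' prod_nonneg)
  also have "\<dots> = (\<integral>\<^sup>+\<tau>. \<integral>\<^sup>+\<xi>. ennreal (\<Prod>i<n. \<tau> (c i)) * ennreal (\<Prod>i<n. f (Y i) (\<xi> (c i))) \<partial>?Q \<partial>?D)"
    using mA mB by (subst Q.nn_integral_fst[symmetric]) (auto simp: case_prod_beta)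
  also have "\<dots> = (\<integral>\<^sup>+\<tau>. ennreal (\<Prod>i<n. \<tau> (c i)) \<partial>?D) * param_integral K P f Y n c"
    using mA mB unfolding param_integral_def
    by (subst nn_integral_cmult, simp, subst nn_integral_multc) auto
  also have "(\<integral>\<^sup>+\<tau>. ennreal (\<Prod>i<n. \<tau> (c i)) \<partial>?D) = ennreal (dirichlet_moment K e (alloc_count n c))"
    unfolding prod_alloc_eq_prod_power[OF c] by (rule nn_integral_dirichlet_monomial[OF K e])
  finally show ?thesis .
qed

lemma AE_mix_lik_expand:
  assumes "K \<ge> 1" "\<forall>g<K. e g > 0" "\<forall>g<K. prob_space (P g)"
    and fn: "\<forall>y x. f y x \<ge> 0" and k: "k \<le> K"
  shows "AE \<theta> in mixture_prior K e P. ennreal (\<Prod>i<n. \<Sum>g<k. fst \<theta> g * f (Y i) (snd \<theta> g))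
       = (\<Sum>c\<in>{..<n} \<rightarrow>\<^sub>E {..<k}. ennreal (complete_lik f Y n c \<theta>))"
  using AE_mixture_prior_nonneg[OF assms(1-3)]
proof eventually_elim
  case (elim \<theta>)
  have "0 \<le> complete_lik f Y n c \<theta>" if "c \<in> {..<n} \<rightarrow>\<^sub>E {..<k}" for c
    unfolding complete_lik_def using elim PiE_lessThan_less[OF PiE_lessThan_mono[OF that k]] fn
    by (intro prod_nonneg mult_nonneg_nonneg) auto
  then show ?case
    by (subst prod_sum_PiE) (auto simp: complete_lik_def)
qed

lemma nn_integral_mix_lik_expand:
  assumes K: "K \<ge> 1" and e: "\<forall>g<K. e g > 0"
    and P: "\<forall>g<K. prob_space (P g) \<and> sets (P g) = sets X"
    and fm: "\<forall>y. f y \<in> borel_measurable X" and fn: "\<forall>y x. f y x \<ge> 0"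
    and k: "k \<le> K"
  shows "(\<integral>\<^sup>+\<theta>. ennreal (\<Prod>i<n. \<Sum>g<k. fst \<theta> g * f (Y i) (snd \<theta> g)) \<partial>mixture_prior K e P)
     = (\<Sum>c\<in>{..<n} \<rightarrow>\<^sub>E {..<k}. ennreal (dirichlet_moment K e (alloc_count n c)) * param_integral K P f Y n c)"
proof -
  have "(\<integral>\<^sup>+\<theta>. ennreal (\<Prod>i<n. \<Sum>g<k. fst \<theta> g * f (Y i) (snd \<theta> g)) \<partial>mixture_prior K e P)
     = (\<integral>\<^sup>+\<theta>. (\<Sum>c\<in>{..<n} \<rightarrow>\<^sub>E {..<k}. ennreal (complete_lik f Y n c \<theta>)) \<partial>mixture_prior K e P)"
    using AE_mix_lik_expand[OF K e _ fn k] P by (intro nn_integral_cong_AE) auto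
  also have "\<dots> = (\<Sum>c\<in>{..<n} \<rightarrow>\<^sub>E {..<k}. \<integral>\<^sup>+\<theta>. ennreal (complete_lik f Y n c \<theta>) \<partial>mixture_prior K e P)"
  proof (rule nn_integral_sum)
    fix c assume "c \<in> {..<n} \<rightarrow>\<^sub>E {..<k}"
    then have "complete_lik f Y n c \<in> borel_measurable (mixture_prior K e P)"
      using P fm by (intro borel_measurable_complete_lik PiE_lessThan_mono[OF _ k]) auto
    then show "(\<lambda>\<theta>. ennreal (complete_lik f Y n c \<theta>)) \<in> borel_measurable (mixture_prior K e P)"
      by measurable
  qed
  also have "\<dots> = (\<Sum>c\<in>{..<n} \<rightarrow>\<^sub>E {..<k}. ennreal (dirichlet_moment K e (alloc_count n c)) * param_integral K P f Y n c)"
    using PiE_lessThan_mono[OF _ k] by (intro sum.cong refl nn_integral_complete_lik[OF K e P fm fn]) auto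
  finally show ?thesis .
qed

section \<open>Emptying the last component\<close>

lemma param_integral_drop_last:
  assumes K: "K \<ge> 2"
    and P: "\<forall>g<K. prob_space (P g) \<and> sets (P g) = sets X"
    and fm: "\<forall>y. f y \<in> borel_measurable X"
    and c: "c \<in> {..<n} \<rightarrow>\<^sub>E {..<K - 1}"
  shows "param_integral K P f Y n c = param_integral (K - 1) P f Y n c"
proof -
  define P' where "P' = (\<lambda>i. if i < K then P i else P 0)"
  have P'_prob: "prob_space (P' i)" for i using P K by (auto simp: P'_def)
  interpret PS: product_prob_space P'
    by (auto simp: product_prob_space_def product_prob_space_axioms_def product_sigma_finite_def
        P'_prob prob_space_imp_sigma_finite)
  have eq_K: "PiM {..<K} P = PiM (insert (K - 1) {..<K - 1}) P'"
    using K by (intro PiM_cong) (auto simp: P'_def)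
  have eq_K1: "PiM {..<K - 1} P = PiM {..<K - 1} P'"
    by (intro PiM_cong) (auto simp: P'_def)
  have ci: "c i < K - 1" if "i < n" for i using PiE_lessThan_less[OF c that] .
  then have "c i < K" if "i < n" for i using that by fastforce
  then have "(\<lambda>\<xi>. ennreal (\<Prod>i<n. f (Y i) (\<xi> (c i)))) \<in> borel_measurable (PiM {..<K} P)"
    using P fm
    by (intro measurable_compose[OF _ measurable_ennreal] borel_measurable_prod borel_measurable_PiM_component_f)
      auto
  then have "param_integral K P f Y n c
      = (\<integral>\<^sup>+\<xi>. (\<integral>\<^sup>+y. ennreal (\<Prod>i<n. f (Y i) ((\<xi>(K - 1 := y)) (c i))) \<partial>P' (K - 1)) \<partial>PiM {..<K - 1} P')"
    unfolding param_integral_def eq_K by (intro PS.product_nn_integral_insert) auto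
  also have "\<dots> = (\<integral>\<^sup>+\<xi>. (\<integral>\<^sup>+y. ennreal (\<Prod>i<n. f (Y i) (\<xi> (c i))) \<partial>P' (K - 1)) \<partial>PiM {..<K - 1} P')"
  proof -
    have "(\<Prod>i<n. f (Y i) ((\<xi>(K - 1 := y)) (c i))) = (\<Prod>i<n. f (Y i) (\<xi> (c i)))" for \<xi> y
      using ci by (intro prod.cong refl) (metis fun_upd_other lessThan_iff less_irrefl)
    then show ?thesis by simp
  qed
  also have "\<dots> = param_integral (K - 1) P f Y n c"
    unfolding param_integral_def eq_K1 by (simp add: prob_space.emeasure_space_1[OF P'_prob])
  finally show ?thesis .
qed

definition gamma_ratio :: "nat \<Rightarrow> nat \<Rightarrow> (nat \<Rightarrow> real) \<Rightarrow> real" where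
  "gamma_ratio n G e = Gamma (\<Sum>g<G. e g) * Gamma (real n + (\<Sum>g<G - 1. e g))
                   / (Gamma (real n + (\<Sum>g<G. e g)) * Gamma (\<Sum>g<G - 1. e g))"

lemma gamma_ratio_pos:
  assumes "G \<ge> 2" "\<forall>g<G. e g > 0"
  shows "gamma_ratio n G e > 0"
proof -
  have "(\<Sum>g<G. e g) > 0" "(\<Sum>g<G - 1. e g) > 0"
    using assms by (auto intro!: sum_lessThan_pos)
  then show ?thesis
    unfolding gamma_ratio_def by (intro divide_pos_pos mult_pos_pos Gamma_real_pos add_nonneg_pos) auto
qed

lemma dirichlet_moment_empty_last:
  assumes k: "k \<ge> 1" and e: "\<forall>g<Suc k. e g > 0" and c: "c \<in> {..<n} \<rightarrow>\<^sub>E {..<k}"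
  shows "dirichlet_moment (Suc k) e (alloc_count n c) = gamma_ratio n (Suc k) e * dirichlet_moment k e (alloc_count n c)"
proof -
  have empty: "alloc_count n c k = 0"
    unfolding alloc_count_def using PiE_lessThan_less[OF c] by auto
  have total: "(\<Sum>g<k. alloc_count n c g) = n" by (rule sum_alloc_count[OF c])
  define S where "S = (\<Sum>g<k. e g)"
  define PG where "PG = (\<Prod>g<k. Gamma (e g))"
  define Q where "Q = (\<Prod>g<k. Gamma (e g + real (alloc_count n c g)))"
  have S: "S > 0" unfolding S_def using k e by (intro sum_lessThan_pos) auto
  have ek: "e k > 0" using e by auto
  have m1: "dirichlet_moment (Suc k) e (alloc_count n c)
      = Gamma (S + e k) / (PG * Gamma (e k)) * (Q * Gamma (e k)) / Gamma (S + e k + real n)"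
    unfolding dirichlet_moment_def S_def PG_def Q_def by (simp add: empty total)
  have m2: "dirichlet_moment k e (alloc_count n c) = Gamma S / PG * Q / Gamma (S + real n)"
    unfolding dirichlet_moment_def S_def PG_def Q_def by (simp add: total)
  have m3: "gamma_ratio n (Suc k) e = Gamma (S + e k) * Gamma (S + real n) / (Gamma (S + e k + real n) * Gamma S)"
    unfolding gamma_ratio_def S_def by (simp add: add_ac)
  have "PG \<noteq> 0" unfolding PG_def using e by (auto simp: less_imp_neq[symmetric])
  moreover have "Gamma (e k) \<noteq> 0" "Gamma S \<noteq> 0" "Gamma (S + e k) \<noteq> 0"
    using S ek by (auto simp: less_imp_neq[symmetric] add_pos_pos)
  moreover have "Gamma (S + real n) \<noteq> 0" "Gamma (S + e k + real n) \<noteq> 0"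
    using S ek by (auto simp: less_imp_neq[symmetric] add_pos_nonneg)
  ultimately show ?thesis
    unfolding m1 m2 m3 by (simp add: field_simps)
qed

text \<open>The weights of the remaining components are not renormalised.\<close>
definition lik_without ::
  "nat \<Rightarrow> ('y \<Rightarrow> 'x \<Rightarrow> real) \<Rightarrow> (nat \<Rightarrow> 'y) \<Rightarrow> nat \<Rightarrow> nat \<Rightarrow> (nat \<Rightarrow> real) \<times> (nat \<Rightarrow> 'x) \<Rightarrow> real" where
  "lik_without G f Y n g \<theta> = (\<Prod>i<n. (\<Sum>h<G. fst \<theta> h * f (Y i) (snd \<theta> h)) - fst \<theta> g * f (Y i) (snd \<theta> g))"

lemma lik_without_last:
  assumes "G \<ge> 1"
  shows "lik_without G f Y n (G - 1) \<theta> = (\<Prod>i<n. \<Sum>h<G - 1. fst \<theta> h * f (Y i) (snd \<theta> h))"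
proof -
  obtain k where "G = Suc k" using assms by (cases G) auto
  then show ?thesis unfolding lik_without_def by simp
qed

lemma borel_measurable_lik_without:
  assumes "\<forall>g<G. sets (P g) = sets X" "\<forall>y. f y \<in> borel_measurable X" "g < G"
  shows "lik_without G f Y n g \<in> borel_measurable (mixture_prior G e P)"
  unfolding lik_without_def using assms
  by (intro borel_measurable_prod borel_measurable_sum borel_measurable_diff borel_measurable_times
        borel_measurable_mixture_prior_weight borel_measurable_mixture_prior_f) auto

lemma nn_integral_lik_without_last:
  assumes G: "G \<ge> 2" and e: "\<forall>g<G. e g > 0"
    and P: "\<forall>g<G. prob_space (P g) \<and> sets (P g) = sets X"
    and fm: "\<forall>y. f y \<in> borel_measurable X" and fn: "\<forall>y x. f y x \<ge> 0"
  shows "(\<integral>\<^sup>+\<theta>. ennreal (lik_without G f Y n (G - 1) \<theta>) \<partial>mixture_prior G e P)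
     = ennreal (gamma_ratio n G e) * marg_lik f Y n e P (G - 1)"
proof -
  obtain k where Gk: "G = Suc k" and k: "k \<ge> 1" using G by (cases G) auto
  have G1: "G \<ge> 1" using G by simp
  have ek: "\<forall>g<k. e g > 0" and Pk: "\<forall>g<k. prob_space (P g) \<and> sets (P g) = sets X"
    using e P Gk by auto
  have "(\<integral>\<^sup>+\<theta>. ennreal (lik_without G f Y n (G - 1) \<theta>) \<partial>mixture_prior G e P)
     = (\<Sum>c\<in>{..<n} \<rightarrow>\<^sub>E {..<k}. ennreal (dirichlet_moment G e (alloc_count n c)) * param_integral G P f Y n c)"
    unfolding lik_without_last[of G, OF G1] using nn_integral_mix_lik_expand[OF G1 e P fm fn, of k] Gk by simp
  also have "\<dots> = (\<Sum>c\<in>{..<n} \<rightarrow>\<^sub>E {..<k}. ennreal (gamma_ratio n G e)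
      * (ennreal (dirichlet_moment k e (alloc_count n c)) * param_integral k P f Y n c))"
  proof (rule sum.cong[OF refl])
    fix c assume c: "c \<in> {..<n} \<rightarrow>\<^sub>E {..<k}"
    have "param_integral G P f Y n c = param_integral k P f Y n c"
      using param_integral_drop_last[OF G P fm, of c] c Gk by simp
    moreover have "dirichlet_moment G e (alloc_count n c) = gamma_ratio n G e * dirichlet_moment k e (alloc_count n c)"
      using dirichlet_moment_empty_last[OF k _ c] e Gk by simp
    ultimately show "ennreal (dirichlet_moment G e (alloc_count n c)) * param_integral G P f Y n c
        = ennreal (gamma_ratio n G e) * (ennreal (dirichlet_moment k e (alloc_count n c)) * param_integral k P f Y n c)"
      using gamma_ratio_pos[OF G e, of n] dirichlet_moment_nonneg[OF k ek, of "alloc_count n c"]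
      by (simp add: ennreal_mult mult.assoc)
  qed
  also have "\<dots> = ennreal (gamma_ratio n G e) * marg_lik f Y n e P (G - 1)"
    unfolding marg_lik_def mix_lik_def sum_distrib_left[symmetric]
    using nn_integral_mix_lik_expand[OF k ek Pk fm fn, of k] Gk by simp
  finally show ?thesis .
qed

section \<open>Relabelling and the posterior mean p0\<close>

definition relabel_params ::
  "nat \<Rightarrow> (nat \<Rightarrow> nat) \<Rightarrow> (nat \<Rightarrow> real) \<times> (nat \<Rightarrow> 'x) \<Rightarrow> (nat \<Rightarrow> real) \<times> (nat \<Rightarrow> 'x)" where
  "relabel_params G \<sigma> = (\<lambda>(\<tau>, \<xi>). (\<lambda>g\<in>{..<G}. \<tau> (\<sigma> g), \<lambda>g\<in>{..<G}. \<xi> (\<sigma> g)))"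

lemma measurable_relabel_params:
  assumes P: "\<forall>g<G. sets (P g) = sets X" and \<sigma>: "\<sigma> permutes {..<G}"
  shows "relabel_params G \<sigma> \<in> measurable (mixture_prior G e P) (mixture_prior G e P)"
proof -
  have \<sigma>_less: "\<sigma> h < G" if "h < G" for h using permutes_in_image[OF \<sigma>] that by auto
  have [measurable]: "(\<lambda>\<tau>. \<lambda>g\<in>{..<G}. \<tau> (\<sigma> g)) \<in> measurable (PiM {..<G} (\<lambda>_. borel :: real measure)) (PiM {..<G} (\<lambda>_. borel))"
    by (rule measurable_restrict) (use \<sigma>_less in auto)
  have [measurable]: "(\<lambda>\<xi>. \<lambda>g\<in>{..<G}. \<xi> (\<sigma> g)) \<in> measurable (PiM {..<G} P) (PiM {..<G} P)"
  proof (rule measurable_restrict)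
    fix h assume h: "h \<in> {..<G}"
    have "(\<lambda>\<xi>. \<xi> (\<sigma> h)) \<in> measurable (PiM {..<G} P) (P (\<sigma> h))"
      using \<sigma>_less h by auto
    moreover have "sets (P (\<sigma> h)) = sets (P h)" using P \<sigma>_less h by auto
    ultimately show "(\<lambda>\<xi>. \<xi> (\<sigma> h)) \<in> measurable (PiM {..<G} P) (P h)"
      using measurable_cong_sets by blast
  qed
  have "relabel_params G \<sigma> \<in> measurable (PiM {..<G} (\<lambda>_. borel) \<Otimes>\<^sub>M PiM {..<G} P) (PiM {..<G} (\<lambda>_. borel) \<Otimes>\<^sub>M PiM {..<G} P)"
    unfolding relabel_params_def split_beta' by measurable
  then show ?thesis
    by (subst measurable_cong_sets[OF sets_mixture_prior sets_mixture_prior])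
qed

lemma lik_without_relabel_params:
  assumes \<sigma>: "\<sigma> permutes {..<G}" and g: "g < G"
  shows "lik_without G f Y n g (relabel_params G \<sigma> \<theta>) = lik_without G f Y n (\<sigma> g) \<theta>"
proof -
  have "(\<Sum>h<G. fst \<theta> (\<sigma> h) * f (Y i) (snd \<theta> (\<sigma> h))) = (\<Sum>h<G. fst \<theta> h * f (Y i) (snd \<theta> h))" for i
    using sum.reindex_bij_betw[OF permutes_imp_bij[OF \<sigma>], of "\<lambda>h. fst \<theta> h * f (Y i) (snd \<theta> h)"] by simp
  then show ?thesis
    unfolding lik_without_def relabel_params_def using g by (simp add: case_prod_beta)
qed

lemma nn_integral_lik_without_relabel:
  assumes P: "\<forall>g<G. sets (P g) = sets X" and fm: "\<forall>y. f y \<in> borel_measurable X"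
    and relabel: "\<forall>\<sigma>. \<sigma> permutes {..<G} \<longrightarrow>
        distr (mixture_prior G e P) (mixture_prior G e P) (relabel_params G \<sigma>) = mixture_prior G e P"
    and g: "g < G" and g': "g' < G"
  shows "(\<integral>\<^sup>+\<theta>. ennreal (lik_without G f Y n g \<theta>) \<partial>mixture_prior G e P)
       = (\<integral>\<^sup>+\<theta>. ennreal (lik_without G f Y n g' \<theta>) \<partial>mixture_prior G e P)"
proof -
  define \<sigma> where "\<sigma> = Transposition.transpose g g'"
  have \<sigma>: "\<sigma> permutes {..<G}" unfolding \<sigma>_def using g g' by (intro permutes_swap_id) auto
  have "(\<integral>\<^sup>+\<theta>. ennreal (lik_without G f Y n g \<theta>) \<partial>mixture_prior G e P)
     = (\<integral>\<^sup>+\<theta>. ennreal (lik_without G f Y n g \<theta>) \<partial>distr (mixture_prior G e P) (mixture_prior G e P) (relabel_params G \<sigma>))"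
    using relabel \<sigma> by simp
  also have "\<dots> = (\<integral>\<^sup>+\<theta>. ennreal (lik_without G f Y n g (relabel_params G \<sigma> \<theta>)) \<partial>mixture_prior G e P)"
    using borel_measurable_lik_without[OF P fm g] measurable_relabel_params[OF P \<sigma>]
    by (subst nn_integral_distr) auto
  also have "\<dots> = (\<integral>\<^sup>+\<theta>. ennreal (lik_without G f Y n g' \<theta>) \<partial>mixture_prior G e P)"
    using lik_without_relabel_params[OF \<sigma> g, where f=f and Y=Y and n=n] by (simp add: \<sigma>_def)
  finally show ?thesis .
qed

lemma mixture_term_bounds:
  fixes f :: "'y \<Rightarrow> 'x \<Rightarrow> real" and G :: nat
  assumes "\<forall>h<G. fst \<theta> h \<ge> 0" "\<forall>y x. f y x \<ge> 0" "g < G"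
  shows "0 \<le> fst \<theta> g * f y (snd \<theta> g)" "fst \<theta> g * f y (snd \<theta> g) \<le> (\<Sum>h<G. fst \<theta> h * f y (snd \<theta> h))"
  using assms by (auto intro!: member_le_sum[where f="\<lambda>h. fst \<theta> h * f y (snd \<theta> h)"])

lemma zprob_bounds:
  fixes f :: "'y \<Rightarrow> 'x \<Rightarrow> real" and G :: nat
  assumes "\<forall>h<G. fst \<theta> h \<ge> 0" "\<forall>y x. f y x \<ge> 0" "g < G"
  shows "0 \<le> zprob f Y G \<theta> i g" "zprob f Y G \<theta> i g \<le> 1"
  using mixture_term_bounds[OF assms, of "Y i"] unfolding zprob_def by (auto simp: divide_le_eq_1)

lemma mix_lik_mult_prod_one_minus_zprob:
  fixes f :: "'y \<Rightarrow> 'x \<Rightarrow> real" and G :: nat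
  assumes "\<forall>h<G. fst \<theta> h \<ge> 0" "\<forall>y x. f y x \<ge> 0" "g < G"
  shows "mix_lik f Y n G \<theta> * (\<Prod>i<n. 1 - zprob f Y G \<theta> i g) = lik_without G f Y n g \<theta>"
proof -
  define S where "S i = (\<Sum>h<G. fst \<theta> h * f (Y i) (snd \<theta> h))" for i
  define a where "a i = fst \<theta> g * f (Y i) (snd \<theta> g)" for i
  \<comment> \<open>if S i = 0 then also a i = 0, so the convention x / 0 = 0 does no harm\<close>
  have "S i * (1 - a i / S i) = S i - a i" for i
    using mixture_term_bounds[OF assms, of "Y i"] unfolding S_def a_def
    by (cases "S i = 0") (auto simp: algebra_simps)
  then show ?thesis
    unfolding mix_lik_def lik_without_def zprob_def S_def[symmetric] a_def[symmetric]
    by (simp add: prod.distrib[symmetric])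
qed

lemma lik_without_nonneg:
  fixes f :: "'y \<Rightarrow> 'x \<Rightarrow> real" and G :: nat
  assumes "\<forall>h<G. fst \<theta> h \<ge> 0" "\<forall>y x. f y x \<ge> 0" "g < G"
  shows "lik_without G f Y n g \<theta> \<ge> 0"
  unfolding lik_without_def using mixture_term_bounds(2)[OF assms] by (intro prod_nonneg) auto

lemma borel_measurable_mix_lik:
  assumes "\<forall>g<G. sets (P g) = sets X" "\<forall>y. f y \<in> borel_measurable X"
  shows "mix_lik f Y n G \<in> borel_measurable (mixture_prior G e P)"
  unfolding mix_lik_def[abs_def] using assms
  by (intro borel_measurable_prod borel_measurable_sum borel_measurable_times
        borel_measurable_mixture_prior_weight borel_measurable_mixture_prior_f) auto

lemma borel_measurable_zprob:
  assumes "\<forall>g<G. sets (P g) = sets X" "\<forall>y. f y \<in> borel_measurable X" "g < G"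
  shows "(\<lambda>\<theta>. zprob f Y G \<theta> i g) \<in> borel_measurable (mixture_prior G e P)"
  unfolding zprob_def using assms
  by (intro borel_measurable_divide borel_measurable_sum borel_measurable_times
        borel_measurable_mixture_prior_weight borel_measurable_mixture_prior_f) auto

lemma prob_space_posterior:
  assumes "mix_lik f Y n G \<in> borel_measurable (mixture_prior G e P)"
    and "0 < marg_lik f Y n e P G" "marg_lik f Y n e P G < \<infinity>"
  shows "prob_space (posterior f Y n e P G)"
proof
  have "emeasure (posterior f Y n e P G) (space (posterior f Y n e P G))
      = (\<integral>\<^sup>+\<theta>. ennreal (mix_lik f Y n G \<theta>) / marg_lik f Y n e P G \<partial>mixture_prior G e P)"
    unfolding posterior_def using assms(1) by (subst emeasure_density) auto
  also have "\<dots> = marg_lik f Y n e P G / marg_lik f Y n e P G"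
    using assms(1) by (subst nn_integral_divide) (auto simp: marg_lik_def)
  also have "\<dots> = 1" using assms(2,3) by (intro ennreal_divide_self) auto
  finally show "emeasure (posterior f Y n e P G) (space (posterior f Y n e P G)) = 1" .
qed

lemma nn_integral_posterior:
  assumes "mix_lik f Y n G \<in> borel_measurable (mixture_prior G e P)"
    and "h \<in> borel_measurable (mixture_prior G e P)"
  shows "(\<integral>\<^sup>+\<theta>. h \<theta> \<partial>posterior f Y n e P G)
      = (\<integral>\<^sup>+\<theta>. ennreal (mix_lik f Y n G \<theta>) * h \<theta> \<partial>mixture_prior G e P) / marg_lik f Y n e P G"
  unfolding posterior_def using assms
  by (subst nn_integral_density) (auto simp: nn_integral_divide[symmetric] ennreal_times_divide mult.commute)

lemma nn_integral_mean_lik_without: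
  assumes G: "G \<ge> 1" and P: "\<forall>g<G. sets (P g) = sets X" and fm: "\<forall>y. f y \<in> borel_measurable X"
    and relabel: "\<forall>\<sigma>. \<sigma> permutes {..<G} \<longrightarrow>
        distr (mixture_prior G e P) (mixture_prior G e P) (relabel_params G \<sigma>) = mixture_prior G e P"
  shows "(\<integral>\<^sup>+\<theta>. ennreal (1 / real G) * (\<Sum>g<G. ennreal (lik_without G f Y n g \<theta>)) \<partial>mixture_prior G e P)
       = (\<integral>\<^sup>+\<theta>. ennreal (lik_without G f Y n (G - 1) \<theta>) \<partial>mixture_prior G e P)"
proof -
  let ?M = "mixture_prior G e P"
  have meas: "(\<lambda>\<theta>. ennreal (lik_without G f Y n g \<theta>)) \<in> borel_measurable ?M" if "g < G" for g
    using borel_measurable_lik_without[OF P fm that] by simp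
  then have "(\<lambda>\<theta>. \<Sum>g<G. ennreal (lik_without G f Y n g \<theta>)) \<in> borel_measurable ?M"
    by (intro borel_measurable_sum) auto
  then have "(\<integral>\<^sup>+\<theta>. ennreal (1 / real G) * (\<Sum>g<G. ennreal (lik_without G f Y n g \<theta>)) \<partial>?M)
      = ennreal (1 / real G) * (\<integral>\<^sup>+\<theta>. (\<Sum>g<G. ennreal (lik_without G f Y n g \<theta>)) \<partial>?M)"
    by (rule nn_integral_cmult)
  also have "(\<integral>\<^sup>+\<theta>. (\<Sum>g<G. ennreal (lik_without G f Y n g \<theta>)) \<partial>?M)
      = (\<Sum>g<G. \<integral>\<^sup>+\<theta>. ennreal (lik_without G f Y n g \<theta>) \<partial>?M)"
    using meas by (intro nn_integral_sum) auto
  also have "\<dots> = (\<Sum>g<G. \<integral>\<^sup>+\<theta>. ennreal (lik_without G f Y n (G - 1) \<theta>) \<partial>?M)"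
    using G by (intro sum.cong refl nn_integral_lik_without_relabel[OF P fm relabel]) auto
  also have "ennreal (1 / real G) * \<dots> = (\<integral>\<^sup>+\<theta>. ennreal (lik_without G f Y n (G - 1) \<theta>) \<partial>?M)"
  proof -
    have "ennreal (1 / real G) * of_nat G = 1"
      using G by (simp add: ennreal_of_nat_eq_real_of_nat ennreal_mult[symmetric])
    then show ?thesis by (simp add: mult.assoc[symmetric])
  qed
  finally show ?thesis .
qed

definition p0_integrand ::
  "('y \<Rightarrow> 'x \<Rightarrow> real) \<Rightarrow> (nat \<Rightarrow> 'y) \<Rightarrow> nat \<Rightarrow> nat \<Rightarrow> (nat \<Rightarrow> real) \<times> (nat \<Rightarrow> 'x) \<Rightarrow> real" where
  "p0_integrand f Y n G \<theta> = (1 / real G) * (\<Sum>g<G. \<Prod>i<n. 1 - zprob f Y G \<theta> i g)"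

lemma p0_integrand_bounds:
  fixes f :: "'y \<Rightarrow> 'x \<Rightarrow> real"
  assumes G: "G \<ge> 1" and \<theta>: "\<forall>h<G. fst \<theta> h \<ge> 0" and fn: "\<forall>y x. f y x \<ge> 0"
  shows "0 \<le> p0_integrand f Y n G \<theta>" "p0_integrand f Y n G \<theta> \<le> 1"
proof -
  have "0 \<le> (\<Prod>i<n. 1 - zprob f Y G \<theta> i g) \<and> (\<Prod>i<n. 1 - zprob f Y G \<theta> i g) \<le> 1" if "g < G" for g
    using zprob_bounds[OF \<theta> fn that] by (auto intro!: prod_nonneg prod_le_1)
  then have "0 \<le> (\<Sum>g<G. \<Prod>i<n. 1 - zprob f Y G \<theta> i g) \<and> (\<Sum>g<G. \<Prod>i<n. 1 - zprob f Y G \<theta> i g) \<le> G"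
    using sum_mono[of "{..<G}" "\<lambda>g. \<Prod>i<n. 1 - zprob f Y G \<theta> i g" "\<lambda>_. 1"] by (auto intro!: sum_nonneg)
  then show "0 \<le> p0_integrand f Y n G \<theta>" "p0_integrand f Y n G \<theta> \<le> 1"
    unfolding p0_integrand_def using G by (auto simp: field_simps)
qed

lemma ennreal_mix_lik_mult_p0_integrand:
  fixes f :: "'y \<Rightarrow> 'x \<Rightarrow> real"
  assumes G: "G \<ge> 1" and \<theta>: "\<forall>h<G. fst \<theta> h \<ge> 0" and fn: "\<forall>y x. f y x \<ge> 0"
  shows "ennreal (mix_lik f Y n G \<theta>) * ennreal (p0_integrand f Y n G \<theta>)
    = ennreal (1 / real G) * (\<Sum>g<G. ennreal (lik_without G f Y n g \<theta>))"
proof -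
  have "mix_lik f Y n G \<theta> \<ge> 0"
    unfolding mix_lik_def using \<theta> fn by (intro prod_nonneg sum_nonneg mult_nonneg_nonneg) auto
  then have "ennreal (mix_lik f Y n G \<theta>) * ennreal (p0_integrand f Y n G \<theta>)
      = ennreal (mix_lik f Y n G \<theta> * p0_integrand f Y n G \<theta>)"
    using p0_integrand_bounds(1)[OF G \<theta> fn] by (simp add: ennreal_mult)
  also have "mix_lik f Y n G \<theta> * p0_integrand f Y n G \<theta> = (1 / real G) * (\<Sum>g<G. lik_without G f Y n g \<theta>)"
    unfolding p0_integrand_def using mix_lik_mult_prod_one_minus_zprob[OF \<theta> fn]
    by (simp add: sum_distrib_left algebra_simps)
  also have "ennreal \<dots> = ennreal (1 / real G) * ennreal (\<Sum>g<G. lik_without G f Y n g \<theta>)"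
    using lik_without_nonneg[OF \<theta> fn] by (intro ennreal_mult sum_nonneg) auto
  also have "ennreal (\<Sum>g<G. lik_without G f Y n g \<theta>) = (\<Sum>g<G. ennreal (lik_without G f Y n g \<theta>))"
    using lik_without_nonneg[OF \<theta> fn] by (subst sum_ennreal) auto
  finally show ?thesis .
qed

lemma borel_measurable_p0_integrand:
  assumes "\<forall>g<G. sets (P g) = sets X" "\<forall>y. f y \<in> borel_measurable X"
  shows "p0_integrand f Y n G \<in> borel_measurable (mixture_prior G e P)"
  unfolding p0_integrand_def[abs_def] using borel_measurable_zprob[OF assms]
  by (intro borel_measurable_times borel_measurable_sum borel_measurable_prod borel_measurable_diff) auto

lemma ennreal_p0_eq_nn_integral_mean_lik_without:
  assumes G: "G \<ge> 1" and e: "\<forall>g<G. e g > 0"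
    and P: "\<forall>g<G. prob_space (P g) \<and> sets (P g) = sets X"
    and fm: "\<forall>y. f y \<in> borel_measurable X" and fn: "\<forall>y x. f y x \<ge> 0"
    and Z_pos: "0 < marg_lik f Y n e P G" and Z_fin: "marg_lik f Y n e P G < \<infinity>"
  shows "ennreal (p0 f Y n e P G) =
     (\<integral>\<^sup>+\<theta>. ennreal (1 / real G) * (\<Sum>g<G. ennreal (lik_without G f Y n g \<theta>)) \<partial>mixture_prior G e P)
       / marg_lik f Y n e P G"
proof -
  let ?M = "mixture_prior G e P" and ?post = "posterior f Y n e P G" and ?h = "p0_integrand f Y n G"
  have Ps: "\<forall>g<G. sets (P g) = sets X" using P by auto
  have mm: "mix_lik f Y n G \<in> borel_measurable ?M" by (rule borel_measurable_mix_lik[OF Ps fm])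
  have hm: "?h \<in> borel_measurable ?M" by (rule borel_measurable_p0_integrand[OF Ps fm])
  interpret post: prob_space ?post by (rule prob_space_posterior[OF mm Z_pos Z_fin])
  have AE_prior: "AE \<theta> in ?M. \<forall>h<G. fst \<theta> h \<ge> 0"
    using P by (intro AE_mixture_prior_nonneg[OF G e]) auto
  have AE_post: "AE \<theta> in ?post. \<forall>h<G. fst \<theta> h \<ge> 0"
    unfolding posterior_def using mm by (subst AE_density) (auto intro: eventually_mono[OF AE_prior])
  have "integrable ?post ?h"
  proof (rule post.integrable_const_bound[where B=1])
    show "AE \<theta> in ?post. norm (?h \<theta>) \<le> 1"
      using AE_post by eventually_elim (use p0_integrand_bounds[OF G _ fn] in auto)
    show "?h \<in> borel_measurable ?post" using hm by (simp add: posterior_def)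
  qed
  then have "ennreal (p0 f Y n e P G) = (\<integral>\<^sup>+\<theta>. ennreal (?h \<theta>) \<partial>?post)"
    unfolding p0_def p0_integrand_def[symmetric] using AE_post
    by (subst nn_integral_eq_integral) (auto elim!: eventually_mono intro: p0_integrand_bounds[OF G _ fn])
  also have "\<dots> = (\<integral>\<^sup>+\<theta>. ennreal (mix_lik f Y n G \<theta>) * ennreal (?h \<theta>) \<partial>?M) / marg_lik f Y n e P G"
    using mm hm by (intro nn_integral_posterior) auto
  also have "(\<integral>\<^sup>+\<theta>. ennreal (mix_lik f Y n G \<theta>) * ennreal (?h \<theta>) \<partial>?M)
      = (\<integral>\<^sup>+\<theta>. ennreal (1 / real G) * (\<Sum>g<G. ennreal (lik_without G f Y n g \<theta>)) \<partial>?M)"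
    using AE_prior by (intro nn_integral_cong_AE) (auto elim!: eventually_mono simp: ennreal_mix_lik_mult_p0_integrand[OF G _ fn])
  finally show ?thesis .
qed

lemma ennreal_p0_eq_nn_integral_lik_without_last:
  assumes G: "G \<ge> 1" and e: "\<forall>g<G. e g > 0"
    and P: "\<forall>g<G. prob_space (P g) \<and> sets (P g) = sets X"
    and fm: "\<forall>y. f y \<in> borel_measurable X" and fn: "\<forall>y x. f y x \<ge> 0"
    and relabel: "\<forall>\<sigma>. \<sigma> permutes {..<G} \<longrightarrow>
        distr (mixture_prior G e P) (mixture_prior G e P) (relabel_params G \<sigma>) = mixture_prior G e P"
    and Z_pos: "0 < marg_lik f Y n e P G" and Z_fin: "marg_lik f Y n e P G < \<infinity>"
  shows "ennreal (p0 f Y n e P G) =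
     (\<integral>\<^sup>+\<theta>. ennreal (lik_without G f Y n (G - 1) \<theta>) \<partial>mixture_prior G e P) / marg_lik f Y n e P G"
proof -
  have Ps: "\<forall>g<G. sets (P g) = sets X" using P by auto
  show ?thesis
    unfolding ennreal_p0_eq_nn_integral_mean_lik_without[OF G e P fm fn Z_pos Z_fin] nn_integral_mean_lik_without[OF G Ps fm relabel] ..
qed

section \<open>The posterior probability that the last component is empty\<close>

lemma allocations_avoiding_last:
  assumes "G \<ge> (1::nat)"
  shows "{c \<in> {..<n} \<rightarrow>\<^sub>E {..<G}. G - 1 \<notin> c ` {..<n}} = {..<n} \<rightarrow>\<^sub>E {..<G - 1}"
proof (intro set_eqI)
  fix c
  have "x < G - Suc 0 \<longleftrightarrow> x < G \<and> x \<noteq> G - Suc 0" for x using assms by auto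
  then show "c \<in> {c \<in> {..<n} \<rightarrow>\<^sub>E {..<G}. G - 1 \<notin> c ` {..<n}} \<longleftrightarrow> c \<in> {..<n} \<rightarrow>\<^sub>E {..<G - 1}"
    unfolding PiE_iff by (auto simp: image_iff Ball_def)
qed

lemma emeasure_density_pair_count_space:
  fixes F :: "'c \<Rightarrow> 'a \<Rightarrow> ennreal"
  assumes C: "finite C" and D: "D \<subseteq> C" and F: "\<And>c. c \<in> C \<Longrightarrow> F c \<in> borel_measurable M"
  shows "emeasure (density (M \<Otimes>\<^sub>M count_space C) (\<lambda>x. F (snd x) (fst x))) (space M \<times> D)
    = (\<integral>\<^sup>+\<theta>. (\<Sum>c\<in>D. F c \<theta>) \<partial>M)"
proof -
  interpret C: sigma_finite_measure "count_space C" by (rule sigma_finite_measure_count_space_finite[OF C])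
  have "(\<lambda>x. F c (fst x)) \<in> borel_measurable (M \<Otimes>\<^sub>M count_space C)" if "c \<in> C" for c
    using F[OF that] by measurable
  then have F_meas: "(\<lambda>x. F (snd x) (fst x)) \<in> borel_measurable (M \<Otimes>\<^sub>M count_space C)"
    by (rule measurable_compose_countable'[OF _ measurable_snd countable_finite[OF C]])
  have D_sets: "space M \<times> D \<in> sets (M \<Otimes>\<^sub>M count_space C)"
    using D by (intro pair_measureI) auto
  have "emeasure (density (M \<Otimes>\<^sub>M count_space C) (\<lambda>x. F (snd x) (fst x))) (space M \<times> D)
      = (\<integral>\<^sup>+x. F (snd x) (fst x) * indicator (space M \<times> D) x \<partial>(M \<Otimes>\<^sub>M count_space C))"
    using F_meas D_sets by (rule emeasure_density)
  also have "\<dots> = (\<integral>\<^sup>+\<theta>. \<integral>\<^sup>+c. F c \<theta> * indicator (space M \<times> D) (\<theta>, c) \<partial>count_space C \<partial>M)"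
    using F_meas D_sets by (subst C.nn_integral_fst[symmetric]) auto
  also have "\<dots> = (\<integral>\<^sup>+\<theta>. (\<Sum>c\<in>D. F c \<theta>) \<partial>M)"
    using C D by (intro nn_integral_cong) (simp add: nn_integral_count_space_finite indicator_def Int_absorb1)
  finally show ?thesis .
qed

lemma emeasure_joint_posterior_last_empty:
  fixes n G :: nat
  assumes G: "G \<ge> 1" and e: "\<forall>g<G. e g > 0"
    and P: "\<forall>g<G. prob_space (P g) \<and> sets (P g) = sets X"
    and fm: "\<forall>y. f y \<in> borel_measurable X" and fn: "\<forall>y x. f y x \<ge> 0"
  shows "emeasure (joint_posterior f Y n e P G)
             {(\<theta>, c) \<in> space (joint_posterior f Y n e P G). G - 1 \<notin> c ` {..<n}}
     = (\<integral>\<^sup>+\<theta>. ennreal (lik_without G f Y n (G - 1) \<theta>) \<partial>mixture_prior G e P) / marg_lik f Y n e P G"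
proof -
  let ?M = "mixture_prior G e P" and ?Z = "marg_lik f Y n e P G"
  let ?C = "{..<n} \<rightarrow>\<^sub>E {..<G}" and ?D = "{..<n} \<rightarrow>\<^sub>E {..<G - 1}"
  define F where "F c \<theta> = ennreal (complete_lik f Y n c \<theta>) / ?Z" for c \<theta>
  have Ps: "\<forall>g<G. sets (P g) = sets X" and Pp: "\<forall>g<G. prob_space (P g)" using P by auto
  have J: "joint_posterior f Y n e P G = density (?M \<Otimes>\<^sub>M count_space ?C) (\<lambda>x. F (snd x) (fst x))"
    unfolding joint_posterior_def F_def complete_lik_def by (simp add: case_prod_beta')
  have "{(\<theta>, c) \<in> space (joint_posterior f Y n e P G). G - 1 \<notin> c ` {..<n}} = space ?M \<times> ?D"
    unfolding J allocations_avoiding_last[OF G, symmetric] by (auto simp: space_pair_measure)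
  moreover have "emeasure (joint_posterior f Y n e P G) (space ?M \<times> ?D) = (\<integral>\<^sup>+\<theta>. (\<Sum>c\<in>?D. F c \<theta>) \<partial>?M)"
    unfolding J
  proof (rule emeasure_density_pair_count_space)
    show "finite ?C" by (intro finite_PiE) auto
    show "?D \<subseteq> ?C" using PiE_lessThan_mono[of _ n "G - 1" G] by auto
    show "F c \<in> borel_measurable ?M" if "c \<in> ?C" for c
      using borel_measurable_complete_lik[OF Ps fm that] unfolding F_def by measurable
  qed
  moreover have "(\<integral>\<^sup>+\<theta>. (\<Sum>c\<in>?D. F c \<theta>) \<partial>?M) = (\<integral>\<^sup>+\<theta>. ennreal (lik_without G f Y n (G - 1) \<theta>) / ?Z \<partial>?M)"
    using AE_mix_lik_expand[OF G e Pp fn diff_le_self[of G 1], where n=n and Y=Y]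
    unfolding lik_without_last[OF G] F_def
    by (intro nn_integral_cong_AE) (auto elim!: eventually_mono simp: divide_ennreal_def sum_distrib_right)
  moreover have "\<dots> = (\<integral>\<^sup>+\<theta>. ennreal (lik_without G f Y n (G - 1) \<theta>) \<partial>?M) / ?Z"
    using borel_measurable_lik_without[OF Ps fm, of "G - 1"] G by (subst nn_integral_divide) auto
  ultimately show ?thesis by simp
qed

section \<open>Consistency\<close>

lemma consistent_continuous_map2:
  fixes \<phi> :: "real \<times> real \<Rightarrow> real"
  assumes \<Omega>: "prob_space \<Omega>" and X: "consistent \<Omega> X a" and Y: "consistent \<Omega> Y b"
    and cont: "isCont \<phi> (a, b)" and \<phi>_meas: "\<phi> \<in> borel_measurable borel"
  shows "consistent \<Omega> (\<lambda>T \<omega>. \<phi> (X T \<omega>, Y T \<omega>)) (\<phi> (a, b))"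
  unfolding consistent_def
proof (intro conjI allI impI)
  interpret prob_space \<Omega> by (rule \<Omega>)
  have [measurable]: "X T \<in> borel_measurable \<Omega>" "Y T \<in> borel_measurable \<Omega>" for T
    using X Y unfolding consistent_def by auto
  note \<phi>_meas[measurable]
  show "(\<lambda>\<omega>. \<phi> (X T \<omega>, Y T \<omega>)) \<in> borel_measurable \<Omega>" for T
    by measurable
  fix \<epsilon> :: real assume "\<epsilon> > 0"
  then obtain d where "d > 0" and d: "\<And>p. dist p (a, b) < d \<Longrightarrow> dist (\<phi> p) (\<phi> (a, b)) < \<epsilon>"
    using cont unfolding continuous_at_eps_delta by blast
  define \<delta> where "\<delta> = d / 3"
  have "\<delta> > 0" using \<open>d > 0\<close> by (simp add: \<delta>_def)
  define A where "A T = {\<omega> \<in> space \<Omega>. \<bar>X T \<omega> - a\<bar> > \<delta>}" for T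
  define B where "B T = {\<omega> \<in> space \<Omega>. \<bar>Y T \<omega> - b\<bar> > \<delta>}" for T
  have incl: "{\<omega> \<in> space \<Omega>. \<bar>\<phi> (X T \<omega>, Y T \<omega>) - \<phi> (a, b)\<bar> > \<epsilon>} \<subseteq> A T \<union> B T" for T
  proof (rule subsetI, rule ccontr)
    fix \<omega> assume \<omega>: "\<omega> \<in> {\<omega> \<in> space \<Omega>. \<bar>\<phi> (X T \<omega>, Y T \<omega>) - \<phi> (a, b)\<bar> > \<epsilon>}" "\<omega> \<notin> A T \<union> B T"
    have "dist (X T \<omega>, Y T \<omega>) (a, b) \<le> \<bar>X T \<omega> - a\<bar> + \<bar>Y T \<omega> - b\<bar>"
      unfolding dist_Pair_Pair dist_real_def using sqrt_sum_squares_le_sum_abs by simp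
    also have "\<dots> < d" using \<omega> \<open>d > 0\<close> by (auto simp: A_def B_def \<delta>_def)
    finally have "dist (\<phi> (X T \<omega>, Y T \<omega>)) (\<phi> (a, b)) < \<epsilon>" by (rule d)
    then show False using \<omega>(1) by (simp add: dist_real_def)
  qed
  have AB_sets: "A T \<in> sets \<Omega>" "B T \<in> sets \<Omega>" for T
    unfolding A_def B_def by measurable
  have bound: "norm (measure \<Omega> {\<omega> \<in> space \<Omega>. \<bar>\<phi> (X T \<omega>, Y T \<omega>) - \<phi> (a, b)\<bar> > \<epsilon>})
      \<le> measure \<Omega> (A T) + measure \<Omega> (B T)" for T
  proof -
    have "measure \<Omega> {\<omega> \<in> space \<Omega>. \<bar>\<phi> (X T \<omega>, Y T \<omega>) - \<phi> (a, b)\<bar> > \<epsilon>} \<le> measure \<Omega> (A T \<union> B T)"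
      using incl AB_sets by (intro finite_measure_mono) auto
    also have "\<dots> \<le> measure \<Omega> (A T) + measure \<Omega> (B T)"
      using AB_sets by (intro measure_subadditive) auto
    finally show ?thesis by simp
  qed
  have "(\<lambda>T. measure \<Omega> (A T)) \<longlonglongrightarrow> 0" "(\<lambda>T. measure \<Omega> (B T)) \<longlonglongrightarrow> 0"
    using X Y \<open>\<delta> > 0\<close> unfolding consistent_def A_def B_def by blast+
  then show "(\<lambda>T. measure \<Omega> {\<omega> \<in> space \<Omega>. \<bar>\<phi> (X T \<omega>, Y T \<omega>) - \<phi> (a, b)\<bar> > \<epsilon>}) \<longlonglongrightarrow> 0"
    by (intro Lim_null_comparison[OF always_eventually[OF allI[OF bound]]] tendsto_add_zero)
qed

lemma consistent_scaled_ratio: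
  assumes \<Omega>: "prob_space \<Omega>" and X: "consistent \<Omega> X a" and Y: "consistent \<Omega> Y b" and b: "b > 0"
  shows "consistent \<Omega> (\<lambda>T \<omega>. K * X T \<omega> * (1 / Y T \<omega>)) (K * a / b)"
proof -
  define \<phi> where "\<phi> p = K * fst p * (1 / snd p)" for p :: "real \<times> real"
  have "isCont \<phi> (a, b)"
    unfolding \<phi>_def using b by (intro continuous_intros) auto
  moreover have "\<phi> \<in> borel_measurable borel"
    unfolding \<phi>_def
    by (intro borel_measurable_times borel_measurable_divide borel_measurable_const
        borel_measurable_continuous_onI continuous_intros)
  ultimately have "consistent \<Omega> (\<lambda>T \<omega>. \<phi> (X T \<omega>, Y T \<omega>)) (\<phi> (a, b))"
    by (rule consistent_continuous_map2[OF \<Omega> X Y])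
  then show ?thesis by (simp add: \<phi>_def)
qed

lemma enn2real_eq_from_ratio:
  fixes Z Z' N :: ennreal and p C :: real
  assumes p_eq: "ennreal p = N / Z" and N_eq: "N = ennreal C * Z'"
    and Z: "0 < Z" "Z < \<infinity>" and C: "C > 0" and p: "p > 0"
  shows "enn2real Z = C * enn2real Z' / p"
proof -
  define z where "z = enn2real Z"
  have Zz: "Z = ennreal z" "z > 0"
    using Z unfolding z_def by (auto simp: ennreal_enn2real_if enn2real_positive_iff)
  have "ennreal p * Z = N * (Z / Z)"
    unfolding p_eq by (rule ennreal_divide_times)
  then have "ennreal C * Z' = ennreal (p * z)"
    using Z p Zz by (simp add: N_eq ennreal_mult)
  have "Z' = Z' * ennreal C / ennreal C"
    using C by (intro ennreal_mult_divide_eq[symmetric]) auto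
  also have "\<dots> = ennreal (p * z / C)"
    using C p Zz by (simp add: mult.commute[of Z'] \<open>ennreal C * Z' = ennreal (p * z)\<close> divide_ennreal)
  finally show ?thesis
    using C p Zz(2) by (simp add: z_def[symmetric])
qed

theorem theorem5:
  fixes f :: "'y \<Rightarrow> 'x \<Rightarrow> real" and Y :: "nat \<Rightarrow> 'y" and n G :: nat
    and e :: "nat \<Rightarrow> real" and P :: "nat \<Rightarrow> 'x measure" and X :: "'x measure"
    and \<Omega> :: "'w measure"
    and draws :: "nat \<Rightarrow> 'w \<Rightarrow> (nat \<Rightarrow> real) \<times> (nat \<Rightarrow> 'x)"
    and Zhat_prev :: "nat \<Rightarrow> 'w \<Rightarrow> real"
  assumes G2: "G \<ge> 2"
    and e_pos: "\<forall>g<G. e g > 0"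
    and P_prob: "\<forall>g<G. prob_space (P g) \<and> sets (P g) = sets X"
    and f_meas: "\<forall>y. f y \<in> borel_measurable X"
    and f_nonneg: "\<forall>y x. f y x \<ge> 0"
    and relabel: "\<forall>\<sigma>. \<sigma> permutes {..<G} \<longrightarrow>
        distr (mixture_prior G e P) (mixture_prior G e P)
          (\<lambda>(\<tau>, \<xi>). (\<lambda>g\<in>{..<G}. \<tau> (\<sigma> g), \<lambda>g\<in>{..<G}. \<xi> (\<sigma> g))) = mixture_prior G e P"
    and Z_pos: "0 < marg_lik f Y n e P G" and Z_fin: "marg_lik f Y n e P G < \<infinity>"
    and Omega: "prob_space \<Omega>"
    and Zprev_cons: "consistent \<Omega> Zhat_prev (enn2real (marg_lik f Y n e P (G - 1)))"
    and p0_cons: "consistent \<Omega> (p0_hat f Y n G draws) (p0 f Y n e P G)"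
    and p0_pos: "p0 f Y n e P G > 0"
  shows "consistent \<Omega>
           (\<lambda>T \<omega>. Gamma (\<Sum>g<G. e g) * Gamma (real n + (\<Sum>g<G - 1. e g))
                   / (Gamma (real n + (\<Sum>g<G. e g)) * Gamma (\<Sum>g<G - 1. e g))
                   * Zhat_prev T \<omega> * (1 / p0_hat f Y n G draws T \<omega>))
           (enn2real (marg_lik f Y n e P G))
       \<and> ennreal (p0 f Y n e P G) =
           emeasure (joint_posterior f Y n e P G)
             {(\<theta>, c) \<in> space (joint_posterior f Y n e P G). G - 1 \<notin> c ` {..<n}}"
proof -
  have G1: "G \<ge> 1" using G2 by simp
  note assms' = G1 e_pos P_prob f_meas f_nonneg
  have p0_eq: "ennreal (p0 f Y n e P G)
      = (\<integral>\<^sup>+\<theta>. ennreal (lik_without G f Y n (G - 1) \<theta>) \<partial>mixture_prior G e P) / marg_lik f Y n e P G"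
    using relabel unfolding relabel_params_def[symmetric]
    by (rule ennreal_p0_eq_nn_integral_lik_without_last[OF assms' _ Z_pos Z_fin])
  have Z_eq: "enn2real (marg_lik f Y n e P G)
      = gamma_ratio n G e * enn2real (marg_lik f Y n e P (G - 1)) / p0 f Y n e P G"
    by (rule enn2real_eq_from_ratio[OF p0_eq nn_integral_lik_without_last[OF G2 e_pos P_prob f_meas f_nonneg]
          Z_pos Z_fin gamma_ratio_pos[OF G2 e_pos] p0_pos])
  have "consistent \<Omega> (\<lambda>T \<omega>. gamma_ratio n G e * Zhat_prev T \<omega> * (1 / p0_hat f Y n G draws T \<omega>))
      (enn2real (marg_lik f Y n e P G))"
    unfolding Z_eq by (rule consistent_scaled_ratio[OF Omega Zprev_cons p0_cons p0_pos])
  then show ?thesis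
    using p0_eq emeasure_joint_posterior_last_empty[OF assms'] unfolding gamma_ratio_def by simp
qed

end
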